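(* Let $A=\{(\alpha,\beta)\in\mathbb R^2:(\beta-1)^2+4\alpha\beta\ge0,\ \beta<0,\ \alpha\le2\}$ and $\widetilde A=\{(\alpha,\beta)\in\mathbb R^2:\beta>0,\ \alpha\ge1\}$. If $(\alpha,\beta)\in A$, then for every $n\ge1$ the polynomial $P_n^{(\alpha,\beta)}$ has only real zeros. If $(\alpha,\beta)\in\widetilde A$, then for every integer $n$ with $1\le n\le\lceil\alpha\rceil$ the polynomial $P_n^{(\alpha,\beta)}$ has only real zeros, where $\lceil\alpha\rceil$ is the smallest integer $\ge\alpha$.
   Context: For real $\alpha,\beta$ with $\beta\neq0$, the polynomials $P_n^{(\alpha,\beta)}(x)$, $n\ge0$, are defined by $\sum_{n\ge0}P_n^{(\alpha,\beta)}(x)\frac{t^n}{n!}=(1-t)^{\alpha}\exp\big(x((1-t)^{\beta}-1)\big)$ (formal power series in $t$). A polynomial "has only real zeros" if all its complex zeros are real. *)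

theory Defs
  imports "HOL-Analysis.Analysis" "HOL-Computational_Algebra.Formal_Power_Series"
begin

definition one_minus_t_pow :: "real \<Rightarrow> complex fps" where
  "one_minus_t_pow a = fps_binomial (complex_of_real a) oo (- fps_X)"

definition gen_fps :: "real \<Rightarrow> real \<Rightarrow> complex \<Rightarrow> complex fps" where
  "gen_fps \<alpha> \<beta> x = one_minus_t_pow \<alpha> * (fps_exp x oo (one_minus_t_pow \<beta> - 1))"

definition P :: "nat \<Rightarrow> real \<Rightarrow> real \<Rightarrow> complex \<Rightarrow> complex" where
  "P n \<alpha> \<beta> x = of_nat (fact n) * fps_nth (gen_fps \<alpha> \<beta> x) n"

definition only_real_zeros :: "(complex \<Rightarrow> complex) \<Rightarrow> bool" where
  "only_real_zeros f \<longleftrightarrow> (\<forall>z. f z = 0 \<longrightarrow> z \<in> \<real>)"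

end

theory Submission
  imports Defs
begin

text \<open>
  Writing G(\<alpha>) for the generating function, comparing coefficients in
  (1 - t) G'(\<alpha>) = - \<alpha> G(\<alpha>) - \<beta> x G(\<alpha> + \<beta>), together with
  P_n(\<alpha> + \<beta>) = P_n(\<alpha>) + P_n(\<alpha>)', gives P_(n+1) = - \<beta> ((x + c) P_n + x P_n') with
  c = (\<alpha> - n) / \<beta>. For c > 0 the operator p \<mapsto> (x + c) p + x p' preserves real-rootedness:
  after splitting off the power of x and the repeated roots of p, what remains has degree m + 1
  and alternating signs at the m + 1 points formed by 0 and the distinct roots of p, so the
  intermediate value theorem gives m real roots and the last root is real too. In the first
  region c > 0 for all n \<ge> 2 except \<alpha> = n = 2, where P_3 is computed explicitly, and P_1,
  P_2 are settled by their discriminants; in the second region c > 0 as long as n < \<alpha>.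
\<close>

section \<open>The generating function\<close>

lemma fps_nth_one_minus_t_pow:
  "fps_nth (one_minus_t_pow a) n = (-1) ^ n * (complex_of_real a gchoose n)"
  by (simp add: one_minus_t_pow_def fps_compose_uminus')

lemma one_minus_t_pow_add:
  "one_minus_t_pow a * one_minus_t_pow b = one_minus_t_pow (a + b)"
  unfolding one_minus_t_pow_def
  by (simp add: fps_binomial_add_mult fps_compose_mult_distrib)

lemma one_minus_t_pow_deriv:
  "(1 - fps_X) * fps_deriv (one_minus_t_pow a) = - fps_const (complex_of_real a) * one_minus_t_pow a"
proof (rule fps_ext)
  fix n
  have "fps_nth ((1 - fps_X) * fps_deriv (one_minus_t_pow a)) n
      = - ((-1) ^ n * (of_nat n * (of_real a gchoose n) + of_nat (Suc n) * (of_real a gchoose Suc n)))"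
    by (cases n) (simp_all add: fps_nth_one_minus_t_pow algebra_simps)
  then show "fps_nth ((1 - fps_X) * fps_deriv (one_minus_t_pow a)) n
      = fps_nth (- fps_const (complex_of_real a) * one_minus_t_pow a) n"
    by (simp add: fps_nth_one_minus_t_pow gbinomial_mult_1)
qed

lemma gen_fps_ODE:
  "(1 - fps_X) * fps_deriv (gen_fps a b x) =
     - fps_const (complex_of_real a) * gen_fps a b x - fps_const (x * complex_of_real b) * gen_fps (a + b) b x"
proof -
  define E where "E = fps_exp x oo (one_minus_t_pow b - 1)"
  have dE: "fps_deriv E = fps_const x * E * fps_deriv (one_minus_t_pow b)"
    unfolding E_def
    by (subst fps_compose_deriv) (simp_all add: fps_compose_mult_distrib fps_nth_one_minus_t_pow)
  have "(1 - fps_X) * fps_deriv (gen_fps a b x)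
      = ((1 - fps_X) * fps_deriv (one_minus_t_pow a)) * E
        + fps_const x * one_minus_t_pow a * E * ((1 - fps_X) * fps_deriv (one_minus_t_pow b))"
    unfolding gen_fps_def E_def[symmetric] fps_deriv_mult dE by (simp add: algebra_simps)
  also have "\<dots> = - fps_const (complex_of_real a) * (one_minus_t_pow a * E)
      - fps_const (x * complex_of_real b) * (one_minus_t_pow a * one_minus_t_pow b * E)"
    unfolding one_minus_t_pow_deriv by (simp add: algebra_simps flip: fps_const_mult fps_const_neg)
  finally show ?thesis
    unfolding gen_fps_def E_def[symmetric] one_minus_t_pow_add .
qed

lemma P_0: "P 0 a b x = 1"
  by (simp add: P_def gen_fps_def fps_nth_one_minus_t_pow)

lemma P_Suc:
  "P (Suc n) a b x = (of_nat n - complex_of_real a) * P n a b x - x * complex_of_real b * P n (a + b) b x"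
proof -
  let ?g = "fps_nth (gen_fps a b x)"
  have "of_nat (Suc n) * ?g (Suc n) - of_nat n * ?g n
      = - complex_of_real a * ?g n - x * complex_of_real b * fps_nth (gen_fps (a + b) b x) n"
    using arg_cong[OF gen_fps_ODE[of a b x], of "\<lambda>f. fps_nth f n"]
    by (cases n) (simp_all add: algebra_simps)
  then show ?thesis
    unfolding P_def fact_Suc of_nat_mult of_nat_id by algebra
qed

text \<open>pCons 0 (p + pderiv p) stands for x P_n(a + b), see P_poly_shift.\<close>
fun P_poly :: "real \<Rightarrow> real \<Rightarrow> nat \<Rightarrow> real poly" where
  "P_poly a b 0 = 1"
| "P_poly a b (Suc n) =
     smult (real n - a) (P_poly a b n) - smult b (pCons 0 (P_poly a b n + pderiv (P_poly a b n)))"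

lemma P_poly_shift: "P_poly (a + b) b n = P_poly a b n + pderiv (P_poly a b n)"
proof (induction n)
  case (Suc n)
  show ?case
    by (rule poly_eqI) (simp add: Suc.IH coeff_pderiv coeff_pCons algebra_simps split: nat.split)
qed simp

lemma P_eq_poly_P_poly: "P n a b x = poly (map_poly complex_of_real (P_poly a b n)) x"
proof (induction n arbitrary: a)
  case 0
  show ?case by (simp add: P_0)
next
  case (Suc n)
  have "P_poly a b (Suc n) = smult (real n - a) (P_poly a b n) - smult b (pCons 0 (P_poly (a + b) b n))"
    by (simp add: P_poly_shift)
  then have step: "map_poly complex_of_real (P_poly a b (Suc n))
      = smult (of_nat n - of_real a) (map_poly of_real (P_poly a b n))
        - smult (of_real b) (pCons 0 (map_poly of_real (P_poly (a + b) b n)))"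
    by (intro poly_eqI) (simp add: coeff_map_poly coeff_pCons split: nat.split)
  show ?case
    unfolding P_Suc Suc.IH step by (simp add: algebra_simps)
qed

section \<open>Real-rooted polynomials\<close>

definition real_rooted :: "real poly \<Rightarrow> bool" where
  "real_rooted p \<longleftrightarrow> (\<exists>c M. c \<noteq> 0 \<and> p = smult c (\<Prod>r\<in>#M. [:-r, 1:]))"

lemma real_rooted_1: "real_rooted 1"
  unfolding real_rooted_def by (intro exI[of _ 1] exI[of _ "{#}"]) simp

lemma real_rooted_linear_factor: "real_rooted [:-r, 1:]"
  unfolding real_rooted_def by (intro exI[of _ 1] exI[of _ "{#r#}"]) simp

lemma real_rooted_smult: "c \<noteq> 0 \<Longrightarrow> real_rooted p \<Longrightarrow> real_rooted (smult c p)"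
  unfolding real_rooted_def by (metis mult_eq_0_iff smult_smult)

lemma real_rooted_mult: "real_rooted p \<Longrightarrow> real_rooted q \<Longrightarrow> real_rooted (p * q)"
proof -
  assume "real_rooted p" "real_rooted q"
  then obtain a M b N where "a \<noteq> 0" "p = smult a (\<Prod>r\<in>#M. [:-r, 1:])"
    "b \<noteq> 0" "q = smult b (\<Prod>r\<in>#N. [:-r, 1:])"
    unfolding real_rooted_def by blast
  then show "real_rooted (p * q)"
    unfolding real_rooted_def by (intro exI[of _ "a * b"] exI[of _ "M + N"]) (simp add: mult_ac)
qed

lemma real_rooted_power: "real_rooted p \<Longrightarrow> real_rooted (p ^ n)"
  by (induction n) (simp_all add: real_rooted_1 real_rooted_mult)

lemma real_rooted_prod: "(\<And>s. s \<in> S \<Longrightarrow> real_rooted (f s)) \<Longrightarrow> real_rooted (\<Prod>s\<in>S. f s)"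
  by (induction S rule: infinite_finite_induct) (simp_all add: real_rooted_1 real_rooted_mult)

lemma real_rooted_linear: "v \<noteq> 0 \<Longrightarrow> real_rooted [:u, v:]"
  using real_rooted_smult[OF _ real_rooted_linear_factor, of v "- u / v"] by simp

lemma real_rooted_degree_le_1:
  assumes "p \<noteq> 0" "degree p \<le> 1"
  shows "real_rooted p"
proof -
  have p: "p = [:coeff p 0, coeff p 1:]"
    using assms(2) by (intro poly_eqI) (auto simp: coeff_pCons coeff_eq_0 split: nat.split)
  show ?thesis
  proof (cases "coeff p 1 = 0")
    case True
    then have "p = smult (coeff p 0) 1" "coeff p 0 \<noteq> 0"
      using p assms(1) by (simp_all add: one_pCons) (metis pCons_0_0)
    then show ?thesis using real_rooted_smult real_rooted_1 by metis
  next
    case False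
    then show ?thesis by (subst p) (rule real_rooted_linear)
  qed
qed

lemma real_rooted_quadratic:
  assumes "c2 \<noteq> 0" and "c1\<^sup>2 - 4 * c2 * c0 \<ge> 0"
  shows "real_rooted [:c0, c1, c2:]"
proof -
  define D where "D = sqrt (c1\<^sup>2 - 4 * c2 * c0)"
  have DD: "D * D = c1\<^sup>2 - 4 * c2 * c0"
    unfolding D_def using assms(2) by simp
  define r1 where "r1 = (- c1 + D) / (2 * c2)"
  define r2 where "r2 = (- c1 - D) / (2 * c2)"
  have sum: "c2 * (r1 + r2) = - c1"
    unfolding r1_def r2_def using assms(1) by (simp add: field_simps)
  have "c2 * (r1 * r2) = (c1 * c1 - D * D) / (4 * c2)"
    unfolding r1_def r2_def using assms(1) by (simp add: field_simps)
  also have "\<dots> = c0"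
    using assms(1) by (simp add: DD power2_eq_square)
  finally have eq: "[:c0, c1, c2:] = smult c2 ([:-r1, 1:] * [:-r2, 1:])"
    using sum by (simp add: algebra_simps)
  show ?thesis
    unfolding eq using assms(1) by (intro real_rooted_smult real_rooted_mult real_rooted_linear_factor)
qed

lemma map_poly_of_real_mult:
  "map_poly complex_of_real (p * q) = map_poly of_real p * map_poly of_real q"
  by (rule poly_eqI) (simp add: coeff_map_poly coeff_mult of_real_sum)

lemma real_rooted_imp_zeros_real:
  assumes "real_rooted p" "poly (map_poly complex_of_real p) z = 0"
  shows "z \<in> \<real>"
proof -
  obtain c M where "c \<noteq> 0" and p: "p = smult c (\<Prod>r\<in>#M. [:-r, 1:])"
    using assms(1) unfolding real_rooted_def by blast
  moreover have "poly (map_poly complex_of_real (\<Prod>r\<in>#M. [:-r, 1:])) z = 0 \<Longrightarrow> z \<in> \<real>"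
    by (induction M) (auto simp: map_poly_of_real_mult map_poly_pCons simp del: mult_pCons_left)
  ultimately show ?thesis
    using assms(2) by (simp add: map_poly_smult)
qed

lemma real_rooted_if_roots:
  assumes "finite T" "p \<noteq> 0" "degree p \<le> Suc (card T)" "\<And>x. x \<in> T \<Longrightarrow> poly p x = 0"
  shows "real_rooted p"
  using assms
proof (induction T arbitrary: p rule: finite_induct)
  case empty
  then show ?case by (simp add: real_rooted_degree_le_1)
next
  case (insert y T)
  obtain q where p: "p = [:-y, 1:] * q"
    using insert.prems(3) by (meson dvdE insertI1 poly_eq_0_iff_dvd)
  have "real_rooted q"
  proof (rule insert.IH)
    show "q \<noteq> 0" using insert.prems(1) p by auto
    then have "degree p = Suc (degree q)"
      unfolding p by (subst degree_mult_eq) auto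
    then show "degree q \<le> Suc (card T)"
      using insert.prems(2) insert.hyps by simp
    show "poly q x = 0" if "x \<in> T" for x
      using insert.prems(3)[of x] that insert.hyps p by auto
  qed
  then show ?case
    unfolding p by (intro real_rooted_mult real_rooted_linear_factor)
qed

lemma sign_prod_diff:
  fixes u :: real
  assumes "finite V" "u \<notin> V"
  shows "(\<Prod>v\<in>V. u - v) * (-1) ^ card {v\<in>V. u < v} > 0"
  using assms
proof (induction V rule: finite_induct)
  case (insert x V)
  then have IH: "(\<Prod>v\<in>V. u - v) * (-1) ^ card {v\<in>V. u < v} > 0" and "u \<noteq> x"
    by auto
  show ?case
  proof (cases "u < x")
    case True
    then have "{v\<in>insert x V. u < v} = insert x {v\<in>V. u < v}" by auto
    then have "(\<Prod>v\<in>insert x V. u - v) * (-1) ^ card {v\<in>insert x V. u < v} =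
        (x - u) * ((\<Prod>v\<in>V. u - v) * (-1) ^ card {v\<in>V. u < v})"
      using insert.hyps by (simp add: algebra_simps)
    then show ?thesis using IH True by simp
  next
    case False
    then have "{v\<in>insert x V. u < v} = {v\<in>V. u < v}" by auto
    then have "(\<Prod>v\<in>insert x V. u - v) * (-1) ^ card {v\<in>insert x V. u < v} =
        (u - x) * ((\<Prod>v\<in>V. u - v) * (-1) ^ card {v\<in>V. u < v})"
      using insert.hyps by (simp add: algebra_simps)
    then show ?thesis using IH False \<open>u \<noteq> x\<close> by simp
  qed
qed simp

lemma real_rooted_if_sign_alternates:
  fixes q :: "real poly"
  assumes U: "finite U" "U \<noteq> {}" and deg: "degree q = card U"
    and sign: "\<And>u. u \<in> U \<Longrightarrow> poly q u * (-1) ^ card {v\<in>U. u < v} > 0"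
  shows "real_rooted q"
proof -
  define succ where "succ u = Min {v\<in>U. u < v}" for u
  define L where "L = U - {Max U}"
  have succ: "succ u \<in> U \<and> u < succ u \<and> (\<forall>v\<in>U. u < v \<longrightarrow> succ u \<le> v)" if "u \<in> L" for u
  proof -
    have "u < Max U"
      using that U unfolding L_def by (simp add: order.not_eq_order_implies_strict)
    then have "{v\<in>U. u < v} \<noteq> {}"
      using Max_in[OF U] by blast
    then show ?thesis
      unfolding succ_def using U Min_in[of "{v\<in>U. u < v}"] by auto
  qed
  have root: "\<exists>x. u < x \<and> x < succ u \<and> poly q x = 0" if "u \<in> L" for u
  proof -
    let ?k = "card {v\<in>U. succ u < v}"
    have "{v\<in>U. u < v} = insert (succ u) {v\<in>U. succ u < v}"
      using succ[OF that] by fastforce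
    then have "card {v\<in>U. u < v} = Suc ?k"
      using U by simp
    moreover have "poly q u * (-1) ^ card {v\<in>U. u < v} > 0"
      using sign that unfolding L_def by blast
    ultimately have "poly q u * (-1) ^ ?k < 0"
      by simp
    moreover have "poly q (succ u) * (-1) ^ ?k > 0"
      using sign succ[OF that] by blast
    ultimately have "poly q u * poly q (succ u) < 0"
      by (cases "even ?k") (auto simp: mult_less_0_iff zero_less_mult_iff)
    then show ?thesis
      using poly_IVT succ[OF that] by blast
  qed
  then obtain t where t: "\<And>u. u \<in> L \<Longrightarrow> u < t u \<and> t u < succ u \<and> poly q (t u) = 0"
    by metis
  have less: "t u < t u'" if "u \<in> L" "u' \<in> L" "u < u'" for u u'
    using t[OF that(1)] t[OF that(2)] succ[OF that(1)] that L_def by fastforce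
  have "inj_on t L"
    by (rule inj_onI) (metis less linorder_neqE less_irrefl)
  then have "card (t ` L) = card U - 1"
    using U unfolding L_def by (simp add: card_image)
  moreover obtain u where "u \<in> U" using U by blast
  then have "q \<noteq> 0" using sign[of u] by auto
  ultimately show ?thesis
    using U deg t by (intro real_rooted_if_roots[of "t ` L"]) (auto simp: L_def)
qed

section \<open>The operator p \<mapsto> (x + c) p + x p'\<close>

text \<open>euler_op c p = x^(1 - c) e^(-x) (x^c e^x p)'\<close>
definition euler_op :: "real \<Rightarrow> real poly \<Rightarrow> real poly" where
  "euler_op c p = [:c, 1:] * p + pCons 0 (pderiv p)"

lemma euler_op_smult: "euler_op c (smult a p) = smult a (euler_op c p)"
  by (simp add: euler_op_def pderiv_smult smult_add_right)

lemma euler_op_x_mult: "euler_op c (pCons 0 p) = pCons 0 (euler_op (c + 1) p)"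
  by (simp add: euler_op_def pderiv_pCons smult_add_left algebra_simps)

lemma euler_op_x_power_mult:
  "euler_op c ([:0, 1:] ^ k * p) = [:0, 1:] ^ k * euler_op (c + real k) p"
proof (induction k arbitrary: c)
  case (Suc k)
  have "[:0, 1:] ^ Suc k * p = pCons 0 ([:0, 1:] ^ k * p)"
    by simp
  then show ?case
    by (simp only: euler_op_x_mult Suc.IH) (simp add: algebra_simps)
qed simp

definition euler_op_core :: "real set \<Rightarrow> real \<Rightarrow> (real \<Rightarrow> real) \<Rightarrow> real poly" where
  "euler_op_core S c w = [:c, 1:] * (\<Prod>s\<in>S. [:-s, 1:])
     + pCons 0 (\<Sum>s\<in>S. smult (w s) (\<Prod>i\<in>S - {s}. [:-i, 1:]))"

lemma euler_op_prod_power: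
  assumes S: "finite S" and w: "\<And>s. s \<in> S \<Longrightarrow> w s \<ge> 1"
  shows "euler_op c (\<Prod>s\<in>S. [:-s, 1:] ^ w s)
     = (\<Prod>s\<in>S. [:-s, 1:] ^ (w s - 1)) * euler_op_core S c (\<lambda>s. real (w s))"
proof -
  define D where "D = (\<Prod>s\<in>S. [:-s, 1:] ^ (w s - 1) :: real poly)"
  have pw: "[:-s, 1:] ^ w s = [:-s, 1:] ^ (w s - 1) * ([:-s, 1:] :: real poly)" if "s \<in> S" for s
    using w[OF that] by (metis le_add_diff_inverse2 power_Suc2 Suc_eq_plus1)
  have prod: "(\<Prod>s\<in>S. [:-s, 1:] ^ w s) = D * (\<Prod>s\<in>S. [:-s, 1:])"
    unfolding D_def prod.distrib[symmetric] by (rule prod.cong) (simp_all add: pw)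
  have "pderiv (\<Prod>s\<in>S. [:-s, 1:] ^ w s) = D * (\<Sum>s\<in>S. smult (real (w s)) (\<Prod>i\<in>S - {s}. [:-i, 1:]))"
    unfolding pderiv_prod sum_distrib_left
  proof (rule sum.cong[OF refl])
    fix s assume s: "s \<in> S"
    have "(\<Prod>i\<in>S - {s}. [:-i, 1:] ^ w i)
        = (\<Prod>i\<in>S - {s}. [:-i, 1:] ^ (w i - 1)) * (\<Prod>i\<in>S - {s}. [:-i, 1:])"
      unfolding prod.distrib[symmetric] by (rule prod.cong) (auto simp: pw)
    moreover have "D = [:-s, 1:] ^ (w s - 1) * (\<Prod>i\<in>S - {s}. [:-i, 1:] ^ (w i - 1))"
      unfolding D_def using prod.remove[OF S s] .
    ultimately show "(\<Prod>i\<in>S - {s}. [:-i, 1:] ^ w i) * pderiv ([:-s, 1:] ^ w s)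
        = D * smult (real (w s)) (\<Prod>i\<in>S - {s}. [:-i, 1:])"
      by (simp add: pderiv_power pderiv_pCons algebra_simps)
  qed
  then show ?thesis
    unfolding euler_op_def euler_op_core_def prod D_def[symmetric]
    by (simp add: mult_pCons_right algebra_simps)
qed

lemma poly_euler_op_core:
  assumes S: "finite S" "0 \<notin> S" and u: "u \<in> insert 0 S"
  shows "poly (euler_op_core S c w) u = (if u = 0 then c else w u) * (\<Prod>v\<in>insert 0 S - {u}. u - v)"
proof (cases "u = 0")
  case True
  then have "insert 0 S - {u} = S" using S by auto
  then show ?thesis
    unfolding euler_op_core_def using True by (simp add: poly_prod poly_sum)
next
  case False
  then have uS: "u \<in> S" using u by auto
  have "(\<Sum>s\<in>S. poly (smult (w s) (\<Prod>i\<in>S - {s}. [:-i, 1:])) u)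
      = poly (smult (w u) (\<Prod>i\<in>S - {u}. [:-i, 1:])) u"
    by (rule sum.remove[OF S(1) uS, THEN trans], subst sum.neutral)
       (use S uS in \<open>auto simp: poly_prod\<close>)
  moreover have "insert 0 S - {u} = insert 0 (S - {u})" using False by auto
  moreover have z: "prod ((-) u) S = 0"
    using S uS by (meson prod_zero right_minus_eq)
  ultimately show ?thesis
    unfolding euler_op_core_def using False S by (simp add: poly_sum poly_prod z)
qed

lemma degree_euler_op_core:
  assumes S: "finite S"
  shows "degree (euler_op_core S c w) = Suc (card S)"
proof -
  have deg_prod: "degree (\<Prod>s\<in>T. [:-s, 1:] :: real poly) = card T" if "finite T" for T
    by (subst degree_prod_sum_eq) auto
  have "degree ([:c, 1:] * (\<Prod>s\<in>S. [:-s, 1:])) = Suc (card S)"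
    using S by (subst degree_mult_eq) (auto simp: deg_prod)
  moreover have "degree (\<Sum>s\<in>S. smult (w s) (\<Prod>i\<in>S - {s}. [:-i, 1:])) < card S \<or> S = {}"
  proof (cases "S = {}")
    case False
    have "degree (\<Sum>s\<in>S. smult (w s) (\<Prod>i\<in>S - {s}. [:-i, 1:])) \<le> card S - 1"
      using S deg_prod by (intro degree_sum_le) (auto intro: order.trans[OF degree_smult_le])
    moreover have "card S > 0" using False S by auto
    ultimately show ?thesis by linarith
  qed simp
  ultimately show ?thesis
    unfolding euler_op_core_def by (subst degree_add_eq_left) auto
qed

lemma real_rooted_euler_op_core:
  assumes S: "finite S" "0 \<notin> S" and c: "c > 0" and w: "\<And>s. s \<in> S \<Longrightarrow> w s > 0"
  shows "real_rooted (euler_op_core S c w)"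
proof (rule real_rooted_if_sign_alternates)
  let ?U = "insert 0 S"
  show "finite ?U" "?U \<noteq> {}" using S by auto
  show "degree (euler_op_core S c w) = card ?U"
    using S by (simp add: degree_euler_op_core)
  fix u assume u: "u \<in> ?U"
  have "{v\<in>?U. u < v} = {v\<in>?U - {u}. u < v}" by auto
  then have "(\<Prod>v\<in>?U - {u}. u - v) * (-1) ^ card {v\<in>?U. u < v} > 0"
    using sign_prod_diff[of "?U - {u}" u] S by simp
  moreover have "(if u = 0 then c else w u) > 0"
    using c w u by auto
  ultimately show "poly (euler_op_core S c w) u * (-1) ^ card {v\<in>?U. u < v} > 0"
    unfolding poly_euler_op_core[OF S u] by (simp add: mult.assoc)
qed

lemma real_rooted_factorization:
  assumes "real_rooted p"
  obtains a k S w where "a \<noteq> 0" "finite S" "0 \<notin> S" "\<forall>s\<in>S. w s \<ge> 1"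
    "p = smult a ([:0, 1:] ^ k * (\<Prod>s\<in>S. [:-s, 1:] ^ w s))"
proof -
  obtain a M where a: "a \<noteq> 0" "p = smult a (\<Prod>r\<in>#M. [:-r, 1:])"
    using assms unfolding real_rooted_def by blast
  define S where "S = set_mset M - {0}"
  have "(\<Prod>r\<in>#M. [:-r, 1:]) = (\<Prod>s\<in>set_mset M. [:-s, 1:] ^ count M s)"
    by (rule image_prod_mset_multiplicity)
  also have "\<dots> = [:0, 1:] ^ count M 0 * (\<Prod>s\<in>S. [:-s, 1:] ^ count M s)"
  proof (cases "0 \<in># M")
    case True
    then show ?thesis
      unfolding S_def using prod.remove[of "set_mset M" 0 "\<lambda>s. [:-s, 1:] ^ count M s"] by simp
  next
    case False
    then show ?thesis
      unfolding S_def by (simp add: not_in_iff)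
  qed
  finally show thesis
    using a by (intro that[of a S "count M"]) (auto simp: S_def)
qed

lemma real_rooted_euler_op:
  assumes "real_rooted p" "c > 0"
  shows "real_rooted (euler_op c p)"
proof -
  obtain a k S w where a: "a \<noteq> 0" and S: "finite S" "0 \<notin> S" and w: "\<forall>s\<in>S. w s \<ge> 1"
    and p: "p = smult a ([:0, 1:] ^ k * (\<Prod>s\<in>S. [:-s, 1:] ^ w s))"
    by (rule real_rooted_factorization[OF assms(1)])
  have "euler_op (c + real k) (\<Prod>s\<in>S. [:-s, 1:] ^ w s)
      = (\<Prod>s\<in>S. [:-s, 1:] ^ (w s - 1)) * euler_op_core S (c + real k) (\<lambda>s. real (w s))"
    using S(1) w by (simp add: euler_op_prod_power)
  then have eq: "euler_op c p = smult a ([:0, 1:] ^ k * ((\<Prod>s\<in>S. [:-s, 1:] ^ (w s - 1))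
      * euler_op_core S (c + real k) (\<lambda>s. real (w s))))"
    unfolding p euler_op_smult euler_op_x_power_mult by simp
  have "real_rooted (euler_op_core S (c + real k) (\<lambda>s. real (w s)))"
    using S assms(2) w by (intro real_rooted_euler_op_core) (auto simp: Suc_le_eq)
  moreover have "real_rooted (\<Prod>s\<in>S. [:-s, 1:] ^ (w s - 1))"
    by (intro real_rooted_prod real_rooted_power real_rooted_linear_factor)
  moreover have "real_rooted ([:0, 1:] ^ k)"
    using real_rooted_power real_rooted_linear_factor[of 0] by simp
  ultimately show ?thesis
    unfolding eq using a by (simp add: real_rooted_smult real_rooted_mult)
qed

section \<open>Real-rootedness of P_n\<close>

lemma P_poly_Suc_euler_op:
  assumes "b \<noteq> 0"
  shows "P_poly a b (Suc k) = smult (- b) (euler_op ((a - real k) / b) (P_poly a b k))"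
  using assms
  by (intro poly_eqI) (simp add: euler_op_def coeff_pCons coeff_pderiv field_simps split: nat.split)

lemma real_rooted_P_poly_Suc:
  assumes "b \<noteq> 0" "(a - real k) / b > 0" "real_rooted (P_poly a b k)"
  shows "real_rooted (P_poly a b (Suc k))"
  unfolding P_poly_Suc_euler_op[OF assms(1)]
  using assms by (intro real_rooted_smult real_rooted_euler_op) auto

lemma P_poly_2: "P_poly a b 2 = [:a\<^sup>2 - a, b * (b - 1 + 2 * a), b\<^sup>2:]"
  by (simp add: numeral_2_eq_2 pderiv_pCons power2_eq_square algebra_simps)

lemma real_rooted_P_poly_2:
  assumes "b \<noteq> 0" "(b - 1)\<^sup>2 + 4 * a * b \<ge> 0"
  shows "real_rooted (P_poly a b 2)"
proof -
  have "(b * (b - 1 + 2 * a))\<^sup>2 - 4 * b\<^sup>2 * (a\<^sup>2 - a) = b\<^sup>2 * ((b - 1)\<^sup>2 + 4 * a * b)"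
    by (simp add: power2_eq_square algebra_simps)
  then show ?thesis
    unfolding P_poly_2 using assms by (intro real_rooted_quadratic) auto
qed

lemma real_rooted_P_poly_3_at_2:
  assumes "b \<noteq> 0" "b\<^sup>2 + 6 * b + 1 \<ge> 0"
  shows "real_rooted (P_poly 2 b 3)"
proof -
  have eq: "P_poly 2 b 3 = smult (- b) ([:0, 1:] * [:2 + 3 * b + b\<^sup>2, 3 * b + 3 * b\<^sup>2, b\<^sup>2:])"
    by (simp add: numeral_3_eq_3 numeral_2_eq_2 pderiv_pCons power2_eq_square algebra_simps)
  have "(3 * b + 3 * b\<^sup>2)\<^sup>2 - 4 * b\<^sup>2 * (2 + 3 * b + b\<^sup>2) = b\<^sup>2 * ((b\<^sup>2 + 6 * b + 1) + 4 * b\<^sup>2)"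
    by (simp add: power2_eq_square algebra_simps)
  also have "\<dots> \<ge> 0"
    using assms(2) zero_le_power2[of b] by (intro mult_nonneg_nonneg) linarith+
  finally show ?thesis
    unfolding eq using assms(1) real_rooted_linear_factor[of 0, simplified]
    by (intro real_rooted_smult real_rooted_mult real_rooted_quadratic) auto
qed

lemma real_rooted_P_poly_neg:
  assumes "(b - 1)\<^sup>2 + 4 * a * b \<ge> 0" "b < 0" "a \<le> 2" "n \<ge> 1"
  shows "real_rooted (P_poly a b n)"
proof -
  have "real_rooted (P_poly a b k)" if "k \<ge> 2" for k
    using that
  proof (induction k rule: nat_induct_at_least)
    case base
    show ?case using assms by (intro real_rooted_P_poly_2) auto
  next
    case (Suc k)
    show ?case
    proof (cases "a = real k")
      case True
      \<comment> \<open>here (a - k) / b = 0 and euler_op gives no information\<close>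
      then have "a = 2" "k = 2" using assms(3) Suc.hyps by auto
      moreover have "b\<^sup>2 + 6 * b + 1 \<ge> 0"
        using assms(1) \<open>a = 2\<close> by (simp add: power2_eq_square algebra_simps)
      ultimately show ?thesis
        using assms(2) real_rooted_P_poly_3_at_2 by (simp add: numeral_3_eq_3)
    next
      case False
      then have "(a - real k) / b > 0"
        using assms(2,3) Suc.hyps by (simp add: divide_neg_neg)
      then show ?thesis
        using assms(2) Suc.IH by (intro real_rooted_P_poly_Suc) auto
    qed
  qed
  moreover have "real_rooted (P_poly a b 1)"
    using assms(2) by (simp add: real_rooted_linear)
  ultimately show ?thesis
    using assms(4) by (cases "n = 1") auto
qed

lemma real_rooted_P_poly_pos:
  assumes "b > 0" "real n < a + 1"
  shows "real_rooted (P_poly a b n)"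
  using assms(2)
proof (induction n)
  case (Suc n)
  then show ?case
    using assms(1) by (intro real_rooted_P_poly_Suc) auto
qed (simp add: real_rooted_1)

lemma only_real_zeros_P_if_real_rooted:
  "real_rooted (P_poly a b n) \<Longrightarrow> only_real_zeros (P n a b)"
  unfolding only_real_zeros_def P_eq_poly_P_poly by (blast intro: real_rooted_imp_zeros_real)

theorem theorem3:
  fixes \<alpha> \<beta> :: real
  shows "((\<beta> - 1)\<^sup>2 + 4 * \<alpha> * \<beta> \<ge> 0 \<and> \<beta> < 0 \<and> \<alpha> \<le> 2 \<longrightarrow>
            (\<forall>n::nat. n \<ge> 1 \<longrightarrow> only_real_zeros (P n \<alpha> \<beta>)))
       \<and> (\<beta> > 0 \<and> \<alpha> \<ge> 1 \<longrightarrow>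
            (\<forall>n::nat. 1 \<le> n \<and> int n \<le> \<lceil>\<alpha>\<rceil> \<longrightarrow> only_real_zeros (P n \<alpha> \<beta>)))"
proof (intro conjI impI allI)
  fix n :: nat
  assume "(\<beta> - 1)\<^sup>2 + 4 * \<alpha> * \<beta> \<ge> 0 \<and> \<beta> < 0 \<and> \<alpha> \<le> 2" "n \<ge> 1"
  then show "only_real_zeros (P n \<alpha> \<beta>)"
    by (intro only_real_zeros_P_if_real_rooted real_rooted_P_poly_neg) auto
next
  fix n :: nat
  assume "\<beta> > 0 \<and> \<alpha> \<ge> 1" "1 \<le> n \<and> int n \<le> \<lceil>\<alpha>\<rceil>"
  moreover have "int n \<le> \<lceil>\<alpha>\<rceil> \<longleftrightarrow> real n < \<alpha> + 1"
    by (simp add: le_ceiling_iff algebra_simps)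
  ultimately show "only_real_zeros (P n \<alpha> \<beta>)"
    by (intro only_real_zeros_P_if_real_rooted real_rooted_P_poly_pos) auto
qed

end
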